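(* Let $\lambda,\mu\ge0$, let $w\ge1$ and $n\ge 0$ be integers, $a=1+\lambda^2$, $b=1+\mu^2$. Let $$D_w(p)=(1-\lambda^2p^2)(1-\mu^2p^2)-(\lambda^2-p^2)(\mu^2-p^2)p^{2w}$$ and $$f(p)=\frac{(1-p^2)\left[(1-\mu^2p^2)+(\mu^2-p^2)p^{2w}\right]}{D_w(p)}\left(\frac{1+p^2}{p}\right)^n\frac1p.$$ Then $$Z_{n,w}(a,b)=-\frac12\sum_{p_k}\mathrm{Res}(f;p_k),$$ where the sum runs over the (distinct complex) zeros $p_k$ of $D_w$.
   Context: A loop of length $n$ in the slit of width $w$ is a lattice path in $\mathbb{Z}^2$ with $n$ steps, each equal to $(1,1)$ or $(1,-1)$, starting at $(0,0)$ and ending at $(n,0)$, all of whose vertices $(x,y)$ satisfy $0\le y\le w$. For such a path $P$, let $u(P)$ be the number of its vertices on the line $y=0$ excluding the initial vertex, and $v(P)$ the number of its vertices on the line $y=w$. The partition function is $Z_{n,w}(a,b)=\sum_P a^{u(P)}b^{v(P)}$, the sum over all loops of length $n$ in the slit of width $w$. *)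

theory Defs
  imports "HOL-Complex_Analysis.Complex_Analysis"
begin

text \<open>A step sequence is a list of integers in {1,-1}; the height of the vertex
  with x-coordinate i is the sum of the first i steps.\<close>

definition path_height :: "int list \<Rightarrow> nat \<Rightarrow> int" where
  "path_height s i = sum_list (take i s)"

definition slit_loops :: "nat \<Rightarrow> nat \<Rightarrow> int list set" where
  "slit_loops n w = {s. length s = n \<and> set s \<subseteq> {1, -1} \<and>
      (\<forall>i\<le>n. 0 \<le> path_height s i \<and> path_height s i \<le> int w) \<and>
      path_height s n = 0}"

definition loop_u :: "int list \<Rightarrow> nat" where
  "loop_u s = card {i \<in> {1..length s}. path_height s i = 0}"

definition loop_v :: "nat \<Rightarrow> int list \<Rightarrow> nat" where
  "loop_v w s = card {i \<in> {0..length s}. path_height s i = int w}"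

definition Zpf :: "nat \<Rightarrow> nat \<Rightarrow> real \<Rightarrow> real \<Rightarrow> real" where
  "Zpf n w a b = (\<Sum>s\<in>slit_loops n w. a ^ loop_u s * b ^ loop_v w s)"

definition Dw :: "real \<Rightarrow> real \<Rightarrow> nat \<Rightarrow> complex \<Rightarrow> complex" where
  "Dw lam mu w p =
     (1 - (of_real lam)^2 * p^2) * (1 - (of_real mu)^2 * p^2)
     - ((of_real lam)^2 - p^2) * ((of_real mu)^2 - p^2) * p^(2*w)"

definition fres :: "real \<Rightarrow> real \<Rightarrow> nat \<Rightarrow> nat \<Rightarrow> complex \<Rightarrow> complex" where
  "fres lam mu w n p =
     (1 - p^2) * ((1 - (of_real mu)^2 * p^2) + ((of_real mu)^2 - p^2) * p^(2*w)) / Dw lam mu w p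
     * ((1 + p^2) / p) ^ n * (1 / p)"

end

theory Submission
  imports Defs
begin

text \<open>
  Let V n h be the weighted count of paths of length n in the slit ending at height h, so that
  Z = V n 0. Appending a step gives V (n+1) h = c h * (V n (h-1) + V n (h+1)) with c 0 = a, c w = b
  and c h = 1 otherwise. The functions
  N h (p) = (1 - p^2) ((1 - \<mu>^2 p^2) p^h + (\<mu>^2 - p^2) p^(2w-h)) satisfy
  (1 + p^2) N h = p (N (h-1) + N (h+1)) for 0 < h < w, with the factor b at h = w and the factor a
  at h = 0 up to a multiple (1 - p^2) D_w of the denominator. Hence the coefficients
  [p^n] (1 + p^2)^n N h / D_w obey the same recursion as V n h and coincide with it; for h = 0
  this coefficient is the residue of f at 0.

  Finally f (1/p) = - p^2 f p, so the integral of f over a large circle equals minus its integral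
  over a small one, and the residue theorem gives  Res(f;0) + \<Sum> Res(f;p_k) = - Res(f;0).
\<close>

section \<open>Weighted paths in the slit\<close>

definition slit_paths :: "nat \<Rightarrow> nat \<Rightarrow> int \<Rightarrow> int list set" where
  "slit_paths w n h = {s. length s = n \<and> set s \<subseteq> {1, -1} \<and>
      (\<forall>i\<le>n. 0 \<le> path_height s i \<and> path_height s i \<le> int w) \<and> path_height s n = h}"

definition path_weight :: "nat \<Rightarrow> 'a::comm_semiring_1 \<Rightarrow> 'a \<Rightarrow> int list \<Rightarrow> 'a" where
  "path_weight w a b s = a ^ loop_u s * b ^ loop_v w s"

definition slit_weight_sum :: "nat \<Rightarrow> 'a::comm_semiring_1 \<Rightarrow> 'a \<Rightarrow> nat \<Rightarrow> int \<Rightarrow> 'a" where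
  "slit_weight_sum w a b n h = (\<Sum>s\<in>slit_paths w n h. path_weight w a b s)"

definition height_weight :: "nat \<Rightarrow> 'a::comm_semiring_1 \<Rightarrow> 'a \<Rightarrow> int \<Rightarrow> 'a" where
  "height_weight w a b h = (if h = 0 then a else 1) * (if h = int w then b else 1)"

lemma path_height_Nil [simp]: "path_height [] i = 0"
  by (simp add: path_height_def)

lemma path_height_append_le: "i \<le> length s \<Longrightarrow> path_height (s @ [x]) i = path_height s i"
  by (simp add: path_height_def)

lemma path_height_append_length:
  "path_height (s @ [x]) (Suc (length s)) = path_height s (length s) + x"
  by (simp add: path_height_def)

lemma card_height_visits_append:
  assumes "k \<le> Suc (length s)"
  shows "card {i \<in> {k..length (s @ [x])}. path_height (s @ [x]) i = c} =
         card {i \<in> {k..length s}. path_height s i = c} +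
           (if path_height s (length s) + x = c then 1 else 0)"
proof -
  have "{i \<in> {k..length (s @ [x])}. path_height (s @ [x]) i = c} =
        (if path_height s (length s) + x = c then insert (Suc (length s)) else id)
          {i \<in> {k..length s}. path_height s i = c}"
    using assms by (auto simp: path_height_append_le path_height_append_length le_Suc_eq)
  then show ?thesis by simp
qed

lemma loop_u_append:
  "loop_u (s @ [x]) = loop_u s + (if path_height s (length s) + x = 0 then 1 else 0)"
  unfolding loop_u_def by (rule card_height_visits_append) simp

lemma loop_v_append:
  "loop_v w (s @ [x]) = loop_v w s + (if path_height s (length s) + x = int w then 1 else 0)"
  unfolding loop_v_def by (rule card_height_visits_append) simp

lemma path_weight_append:
  "path_weight w a b (s @ [x]) =
     path_weight w a b s * height_weight w a b (path_height s (length s) + x)"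
  by (simp add: path_weight_def height_weight_def loop_u_append loop_v_append power_add mult_ac)

lemma finite_slit_paths: "finite (slit_paths w n h)"
proof (rule finite_subset)
  show "slit_paths w n h \<subseteq> {xs. set xs \<subseteq> {1, -1} \<and> length xs = n}"
    by (auto simp: slit_paths_def)
qed (simp add: finite_lists_length_eq)

lemma slit_weight_sum_outside:
  assumes "h < 0 \<or> h > int w"
  shows "slit_weight_sum w a b n h = 0"
proof -
  have "slit_paths w n h = {}"
    using assms by (force simp: slit_paths_def)
  then show ?thesis by (simp add: slit_weight_sum_def)
qed

lemma slit_weight_sum_0: "w \<ge> 1 \<Longrightarrow> slit_weight_sum w a b 0 h = (if h = 0 then 1 else 0)"
proof -
  assume "w \<ge> 1"
  then have "path_weight w a b [] = 1"
    by (simp add: path_weight_def loop_u_def loop_v_def)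
  moreover have "slit_paths w 0 h = (if h = 0 then {[]} else {})"
    by (auto simp: slit_paths_def)
  ultimately show ?thesis by (simp add: slit_weight_sum_def)
qed

lemma slit_paths_Suc:
  assumes "0 \<le> h" "h \<le> int w"
  shows "slit_paths w (Suc n) h =
         (\<lambda>s. s @ [1]) ` slit_paths w n (h - 1) \<union> (\<lambda>s. s @ [-1]) ` slit_paths w n (h + 1)"
proof (intro equalityI subsetI)
  fix t assume t: "t \<in> slit_paths w (Suc n) h"
  then have "length t = Suc n" by (simp add: slit_paths_def)
  then obtain s x where tx: "t = s @ [x]" and ls: "length s = n"
    by (auto simp: length_Suc_conv_rev)
  have "path_height s i = path_height t i" if "i \<le> n" for i
    using that tx ls by (simp add: path_height_append_le)
  moreover have "path_height s n + x = h"
    using t tx ls path_height_append_length[of s x] by (simp add: slit_paths_def)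
  moreover have "x = 1 \<or> x = -1" "set s \<subseteq> {1, -1}"
    using t tx by (auto simp: slit_paths_def)
  ultimately show "t \<in> (\<lambda>s. s @ [1]) ` slit_paths w n (h - 1) \<union>
                       (\<lambda>s. s @ [-1]) ` slit_paths w n (h + 1)"
    using t tx ls by (auto simp: slit_paths_def)
next
  fix t
  assume "t \<in> (\<lambda>s. s @ [1]) ` slit_paths w n (h - 1) \<union> (\<lambda>s. s @ [-1]) ` slit_paths w n (h + 1)"
  then obtain s x
    where tx: "t = s @ [x]" and x: "x = 1 \<or> x = -1" and s: "s \<in> slit_paths w n (h - x)"
    by auto
  have ls: "length s = n" using s by (simp add: slit_paths_def)
  have "0 \<le> path_height t i \<and> path_height t i \<le> int w" if "i \<le> Suc n" for i
  proof (cases "i \<le> n")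
    case True then show ?thesis using s ls tx by (simp add: path_height_append_le slit_paths_def)
  next
    case False
    then have "i = Suc n" using that by simp
    then show ?thesis
      using s ls tx assms path_height_append_length[of s x] by (simp add: slit_paths_def)
  qed
  then show "t \<in> slit_paths w (Suc n) h"
    using s ls tx x path_height_append_length[of s x] by (auto simp: slit_paths_def)
qed

lemma slit_weight_sum_Suc:
  assumes "0 \<le> h" "h \<le> int w"
  shows "slit_weight_sum w a b (Suc n) h =
         height_weight w a b h *
           (slit_weight_sum w a b n (h - 1) + slit_weight_sum w a b n (h + 1))"
proof -
  have inj: "inj_on (\<lambda>s. s @ [x]) A" for x :: int and A by (auto simp: inj_on_def)
  have "slit_weight_sum w a b (Suc n) h =
        (\<Sum>s\<in>slit_paths w n (h - 1). path_weight w a b (s @ [1])) +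
        (\<Sum>s\<in>slit_paths w n (h + 1). path_weight w a b (s @ [-1]))"
    unfolding slit_weight_sum_def slit_paths_Suc[OF assms]
    by (subst sum.union_disjoint) (auto simp: finite_slit_paths sum.reindex[OF inj])
  also have "\<dots> = (\<Sum>s\<in>slit_paths w n (h - 1). path_weight w a b s * height_weight w a b h) +
                  (\<Sum>s\<in>slit_paths w n (h + 1). path_weight w a b s * height_weight w a b h)"
    by (intro arg_cong2[where f = "(+)"] sum.cong) (auto simp: path_weight_append slit_paths_def)
  finally show ?thesis
    unfolding slit_weight_sum_def sum_distrib_right[symmetric] by (simp add: algebra_simps)
qed

section \<open>Generating functions\<close>

definition slit_den :: "'a::comm_ring_1 \<Rightarrow> 'a \<Rightarrow> nat \<Rightarrow> 'a \<Rightarrow> 'a" where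
  "slit_den L M w x = (1 - L * x^2) * (1 - M * x^2) - (L - x^2) * (M - x^2) * x^(2*w)"

definition slit_num :: "'a::comm_ring_1 \<Rightarrow> nat \<Rightarrow> nat \<Rightarrow> 'a \<Rightarrow> 'a" where
  "slit_num M w h x = (1 - x^2) * ((1 - M * x^2) * x^h + (M - x^2) * x^(2*w - h))"

lemma slit_num_interior:
  assumes "1 \<le> h" "h + 1 \<le> w"
  shows "(1 + x^2) * slit_num M w h x = x * (slit_num M w (h - 1) x + slit_num M w (h + 1) x)"
proof -
  obtain k where k: "h = Suc k" using assms by (cases h) auto
  obtain e where e: "2*w - Suc (Suc k) = e" "2*w - Suc k = Suc e" "2*w - k = Suc (Suc e)"
    using assms k by (intro that[of "2*w - Suc (Suc k)"]) simp_all
  have hk: "h - 1 = k" "h + 1 = Suc (Suc k)" using k by simp_all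
  show ?thesis
    unfolding slit_num_def hk unfolding k e by (simp add: algebra_simps power2_eq_square)
qed

lemma slit_num_top:
  assumes "1 \<le> w"
  shows "(1 + x^2) * slit_num M w w x = (1 + M) * x * slit_num M w (w - 1) x"
proof -
  obtain k where k: "w = Suc k" using assms by (cases w) auto
  have "2 * Suc k - Suc k = Suc k" "2 * Suc k - k = Suc (Suc k)" by simp_all
  then show ?thesis
    unfolding slit_num_def k by (simp add: algebra_simps power2_eq_square)
qed

lemma slit_num_bottom:
  assumes "1 \<le> w"
  shows "(1 + x^2) * slit_num M w 0 x =
         (1 + L) * x * slit_num M w 1 x + (1 - x^2) * slit_den L M w x"
proof -
  obtain k where k: "2*w = Suc (Suc k)" using assms by (cases w) auto
  then have "2*w - 1 = Suc k" by simp
  then show ?thesis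
    unfolding slit_num_def slit_den_def k by (simp add: algebra_simps power2_eq_square)
qed

definition slit_gf :: "'a::field \<Rightarrow> 'a \<Rightarrow> nat \<Rightarrow> nat \<Rightarrow> 'a fps" where
  "slit_gf L M w h =
     slit_num (fps_const M) w h fps_X * inverse (slit_den (fps_const L) (fps_const M) w fps_X)"

definition slit_coeff :: "'a::field \<Rightarrow> 'a \<Rightarrow> nat \<Rightarrow> nat \<Rightarrow> nat \<Rightarrow> 'a" where
  "slit_coeff L M w n h = fps_nth ((1 + fps_X^2)^n * slit_gf L M w h) n"

lemma slit_den_fps_nth_0: "w \<ge> 1 \<Longrightarrow> fps_nth (slit_den (fps_const L) (fps_const M) w fps_X) 0 = 1"
  unfolding slit_den_def fps_sub_nth fps_mult_nth_0 fps_nth_fps_const fps_one_nth fps_X_power_nth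
  by simp

lemma slit_gf_nth_0:
  assumes "w \<ge> 1" "h \<le> w"
  shows "fps_nth (slit_gf L M w h) 0 = (if h = 0 then 1 else 0)"
proof -
  have "2*w - h \<noteq> 0" using assms by linarith
  then have "fps_nth (slit_num (fps_const M) w h fps_X) 0 = (if h = 0 then 1 else 0)"
    unfolding slit_num_def fps_mult_nth_0 fps_add_nth fps_sub_nth fps_X_power_nth fps_one_nth
      fps_nth_fps_const
    by simp
  then show ?thesis
    unfolding slit_gf_def fps_mult_nth_0 fps_inverse_nth_0 slit_den_fps_nth_0[OF assms(1)] by simp
qed

lemma slit_gf_interior:
  assumes "1 \<le> h" "h + 1 \<le> w"
  shows "(1 + fps_X^2) * slit_gf L M w h = fps_X * (slit_gf L M w (h - 1) + slit_gf L M w (h + 1))"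
  unfolding slit_gf_def mult.assoc[symmetric] slit_num_interior[OF assms]
  by (simp only: distrib_left distrib_right mult.assoc)

lemma slit_gf_top:
  assumes "1 \<le> w"
  shows "(1 + fps_X^2) * slit_gf L M w w = (1 + fps_const M) * fps_X * slit_gf L M w (w - 1)"
  unfolding slit_gf_def mult.assoc[symmetric] slit_num_top[OF assms] ..

lemma slit_gf_bottom:
  assumes "1 \<le> w"
  shows "(1 + fps_X^2) * slit_gf L M w 0 =
         (1 + fps_const L) * fps_X * slit_gf L M w 1 + (1 - fps_X^2)"
proof -
  let ?D = "slit_den (fps_const L) (fps_const M) w fps_X"
  have "?D * inverse ?D = 1"
    by (rule inverse_mult_eq_1') (simp add: slit_den_fps_nth_0[OF assms])
  then show ?thesis
    unfolding slit_gf_def mult.assoc[symmetric] slit_num_bottom[OF assms, where L = "fps_const L"]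
    by (simp only: distrib_right mult.assoc mult_1_right)
qed

lemma fps_one_plus_X2_power_nth:
  "fps_nth ((1 + fps_X^2 :: 'a::comm_ring_1 fps)^n) k =
     (if even k then of_nat (n choose (k div 2)) else 0)"
proof (induction n arbitrary: k)
  case 0
  then show ?case by (cases k) auto
next
  case (Suc n)
  have "(1 + fps_X^2 :: 'a fps)^Suc n = (1 + fps_X^2)^n + fps_X^2 * (1 + fps_X^2)^n"
    by (simp add: algebra_simps)
  then have step: "fps_nth ((1 + fps_X^2 :: 'a fps)^Suc n) k =
             fps_nth ((1 + fps_X^2)^n) k + (if k < 2 then 0 else fps_nth ((1 + fps_X^2)^n) (k - 2))"
    by (simp only: fps_add_nth fps_X_power_mult_nth)
  consider "k = 0" | "k = 1" | j where "k = Suc (Suc j)"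
    by (metis One_nat_def not0_implies_Suc)
  then show ?case
  proof cases
    case 3
    then show ?thesis
      using step Suc.IH by (cases "even j") (auto elim!: evenE)
  qed (use step Suc.IH in auto)
qed

lemma fps_one_plus_X2_power_times_one_minus_X2_nth:
  "fps_nth ((1 + fps_X^2 :: 'a::comm_ring_1 fps)^n * (1 - fps_X^2)) (Suc n) = 0"
proof -
  have "(1 + fps_X^2 :: 'a fps)^n * (1 - fps_X^2) = (1 + fps_X^2)^n - fps_X^2 * (1 + fps_X^2)^n"
    by (simp add: algebra_simps)
  then have "fps_nth ((1 + fps_X^2 :: 'a fps)^n * (1 - fps_X^2)) (Suc n) =
             fps_nth ((1 + fps_X^2)^n) (Suc n) -
               (if Suc n < 2 then 0 else fps_nth ((1 + fps_X^2)^n) (Suc n - 2))"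
    by (simp only: fps_sub_nth fps_X_power_mult_nth)
  also have "\<dots> = 0"
  proof (cases "even n")
    case True
    then show ?thesis by (simp add: fps_one_plus_X2_power_nth)
  next
    case False
    then obtain q where q: "n = Suc (2*q)" by (elim oddE) simp
    have "Suc (2*q) choose Suc q = Suc (2*q) choose q"
      using binomial_symmetric[of q "Suc (2*q)"] by simp
    then show ?thesis unfolding fps_one_plus_X2_power_nth q by simp
  qed
  finally show ?thesis .
qed

lemma slit_coeff_Suc:
  "slit_coeff L M w (Suc n) h =
     fps_nth ((1 + fps_X^2)^n * ((1 + fps_X^2) * slit_gf L M w h)) (Suc n)"
  unfolding slit_coeff_def by (simp add: mult_ac)

lemma slit_coeff_Suc_interior:
  assumes "1 \<le> h" "h + 1 \<le> w"
  shows "slit_coeff L M w (Suc n) h = slit_coeff L M w n (h - 1) + slit_coeff L M w n (h + 1)"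
proof -
  have eq: "(1 + fps_X^2)^n * (fps_X * (slit_gf L M w (h - 1) + slit_gf L M w (h + 1))) =
        fps_X * ((1 + fps_X^2)^n * slit_gf L M w (h - 1) + (1 + fps_X^2)^n * slit_gf L M w (h + 1))"
    by (simp only: distrib_left mult.left_commute)
  show ?thesis
    unfolding slit_coeff_Suc slit_gf_interior[OF assms] eq fps_X_mult_nth fps_add_nth
    by (simp add: slit_coeff_def)
qed

lemma slit_coeff_Suc_top:
  assumes "1 \<le> w"
  shows "slit_coeff L M w (Suc n) w = (1 + M) * slit_coeff L M w n (w - 1)"
proof -
  have "(1 + fps_X^2)^n * ((1 + fps_const M) * fps_X * slit_gf L M w (w - 1)) =
        (1 + fps_const M) * (fps_X * ((1 + fps_X^2)^n * slit_gf L M w (w - 1)))"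
    by (simp only: mult_ac)
  then show ?thesis
    unfolding slit_coeff_Suc slit_gf_top[OF assms] by (simp add: slit_coeff_def distrib_right)
qed

lemma slit_coeff_Suc_bottom:
  assumes "1 \<le> w"
  shows "slit_coeff L M w (Suc n) 0 = (1 + L) * slit_coeff L M w n 1"
proof -
  have "(1 + fps_X^2)^n * ((1 + fps_const L) * fps_X * slit_gf L M w 1) =
        (1 + fps_const L) * (fps_X * ((1 + fps_X^2)^n * slit_gf L M w 1))"
    by (simp only: mult_ac)
  then show ?thesis
    unfolding slit_coeff_Suc slit_gf_bottom[OF assms] distrib_left fps_add_nth
      fps_one_plus_X2_power_times_one_minus_X2_nth
    by (simp add: slit_coeff_def distrib_right)
qed

lemma slit_weight_sum_eq_slit_coeff:
  fixes L M :: "'a::field"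
  assumes w: "w \<ge> 1"
  shows "h \<le> w \<Longrightarrow> slit_weight_sum w (1 + L) (1 + M) n (int h) = slit_coeff L M w n h"
proof (induction n arbitrary: h)
  case 0
  then show ?case
    by (simp add: slit_coeff_def slit_gf_nth_0[OF w] slit_weight_sum_0[OF w])
next
  case (Suc n)
  let ?V = "slit_weight_sum w (1 + L) (1 + M)"
  consider "h = 0" | "h = w" | "1 \<le> h" "h + 1 \<le> w" using Suc.prems w by linarith
  then show ?case
  proof cases
    case 1
    have "?V (Suc n) 0 = (1 + L) * (?V n (-1) + ?V n (int 1))"
      using slit_weight_sum_Suc[of 0 w "1 + L" "1 + M" n] w by (simp add: height_weight_def)
    moreover have "?V n (-1) = 0"
      by (rule slit_weight_sum_outside) simp
    ultimately show ?thesis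
      using 1 Suc.IH[of 1] w by (simp add: slit_coeff_Suc_bottom[OF w])
  next
    case 2
    have "?V (Suc n) (int w) = (1 + M) * (?V n (int (w - 1)) + ?V n (int w + 1))"
      using slit_weight_sum_Suc[of "int w" w "1 + L" "1 + M" n] w
      by (simp add: height_weight_def of_nat_diff)
    moreover have "?V n (int w + 1) = 0"
      by (rule slit_weight_sum_outside) simp
    ultimately show ?thesis
      using 2 Suc.IH[of "w - 1"] by (simp add: slit_coeff_Suc_top[OF w])
  next
    case 3
    have "?V (Suc n) (int h) = ?V n (int (h - 1)) + ?V n (int (h + 1))"
      using slit_weight_sum_Suc[of "int h" w "1 + L" "1 + M" n] 3
      by (simp add: height_weight_def of_nat_diff add.commute)
    then show ?thesis
      using 3 Suc.IH[of "h - 1"] Suc.IH[of "h + 1"] by (simp add: slit_coeff_Suc_interior[OF 3])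
  qed
qed

section \<open>Residues\<close>

lemma finite_slit_den_zeros:
  assumes "w \<ge> 1"
  shows "finite {x::'a::idom. slit_den L M w x = 0}"
proof -
  define P where "P = [:1, 0, -L:] * [:1, 0, -M:] - [:L, 0, -1:] * [:M, 0, -1:] * monom 1 (2*w)"
  have P: "poly P x = slit_den L M w x" for x
    unfolding P_def slit_den_def by (simp add: poly_monom algebra_simps power2_eq_square)
  have "poly P 0 = 1"
    using assms unfolding P by (simp add: slit_den_def)
  then have "P \<noteq> 0" by auto
  then show ?thesis
    using poly_roots_finite[of P] by (simp add: P)
qed

lemma slit_den_inverse:
  fixes x :: "'a::field"
  assumes "x \<noteq> 0"
  shows "slit_den L M w (1/x) = - slit_den L M w x / (x^4 * x^(2*w))"
  using assms by (simp add: slit_den_def field_simps power2_eq_square power4_eq_xxxx)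

lemma slit_num_inverse:
  fixes x :: "'a::field"
  assumes "x \<noteq> 0"
  shows "slit_num M w 0 (1/x) = slit_num M w 0 x / (x^4 * x^(2*w))"
  using assms by (simp add: slit_num_def field_simps power2_eq_square power4_eq_xxxx)

lemma Dw_eq_slit_den: "Dw lam mu w = slit_den ((of_real lam)^2) ((of_real mu)^2) w"
  by (simp add: fun_eq_iff Dw_def slit_den_def)

lemma fres_eq:
  "fres lam mu w n p =
     slit_num ((of_real mu)^2) w 0 p / Dw lam mu w p * ((1 + p^2) / p) ^ n * (1 / p)"
  by (simp add: fres_def slit_num_def)

lemma fres_inverse:
  assumes q: "q \<noteq> 0" and D: "Dw lam mu w q \<noteq> 0"
  shows "fres lam mu w n (1/q) = - (q^2) * fres lam mu w n q"
proof -
  define T where "T = ((1 + q^2) / q) ^ n"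
  have inv: "(1 + (1/q)^2) / (1/q) = (1 + q^2) / q"
    using q by (simp add: field_simps power2_eq_square)
  show ?thesis
    using q D unfolding fres_eq Dw_eq_slit_den inv T_def[symmetric]
    by (simp add: slit_den_inverse slit_num_inverse field_simps power2_eq_square)
qed

lemma fres_holomorphic: "fres lam mu w n holomorphic_on - insert 0 {p. Dw lam mu w p = 0}"
proof -
  have "(\<lambda>p. slit_num ((of_real mu)^2) w 0 p / Dw lam mu w p * ((1 + p^2) / p) ^ n * (1 / p))
          holomorphic_on - insert 0 {p. Dw lam mu w p = 0}"
    unfolding slit_num_def Dw_def by (intro holomorphic_intros) auto
  then show ?thesis
    by (simp add: fres_eq[abs_def])
qed

lemma has_fps_expansion_slit_num:
  "(\<lambda>z::complex. slit_num M w h z) has_fps_expansion slit_num (fps_const M) w h fps_X"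
  unfolding slit_num_def by (intro fps_expansion_intros)

lemma has_fps_expansion_slit_den:
  "(\<lambda>z::complex. slit_den L M w z) has_fps_expansion slit_den (fps_const L) (fps_const M) w fps_X"
  unfolding slit_den_def by (intro fps_expansion_intros)

lemma residue_fres_0:
  assumes w: "w \<ge> 1"
  shows "residue (fres lam mu w n) 0 = slit_coeff ((of_real lam)^2) ((of_real mu)^2) w n 0"
proof -
  define L M :: complex where "L = (of_real lam)^2" and "M = (of_real mu)^2"
  define H where "H z = (1 + z^2)^n * (slit_num M w 0 z / slit_den L M w z)" for z
  have "H has_fps_expansion (1 + fps_X^2)^n *
          (slit_num (fps_const M) w 0 fps_X / slit_den (fps_const L) (fps_const M) w fps_X)"
    unfolding H_def
    by (intro fps_expansion_intros has_fps_expansion_slit_num has_fps_expansion_slit_den)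
      (simp add: slit_den_fps_nth_0[OF w])
  also have "slit_num (fps_const M) w 0 fps_X / slit_den (fps_const L) (fps_const M) w fps_X =
             slit_gf L M w 0"
    unfolding slit_gf_def by (rule fps_divide_unit) (simp add: slit_den_fps_nth_0[OF w])
  moreover have "fres lam mu w n = (\<lambda>z. H z / z ^ Suc n)"
  proof
    fix z :: complex
    show "fres lam mu w n z = H z / z ^ Suc n"
      by (cases "z = 0")
        (simp_all add: fres_eq H_def L_def M_def Dw_eq_slit_den power_divide field_simps)
  qed
  ultimately show ?thesis
    using residue_fps_expansion_over_power_at_0 by (simp add: slit_coeff_def L_def M_def)
qed

text \<open>The substitution z = 1/q carries the reversed circle of radius 1/R onto the circle of
  radius R, and the hypothesis on f says exactly that f z dz = f q dq.\<close>

lemma has_contour_integral_circlepath_inversion: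
  fixes f :: "complex \<Rightarrow> complex"
  assumes R: "R > 0"
    and inv: "\<And>q. norm q = R \<Longrightarrow> f (1/q) = - (q^2) * f q"
    and I: "(f has_contour_integral I) (reversepath (circlepath 0 (1/R)))"
  shows "(f has_contour_integral I) (circlepath 0 R)"
proof -
  let ?g = "reversepath (circlepath 0 (1/R))"
  have "f (circlepath 0 R t) * vector_derivative (circlepath 0 R) (at t within {0..1}) =
        f (?g t) * vector_derivative ?g (at t within {0..1})" if t: "t \<in> {0..1}" for t
  proof -
    define u where "u = exp (2 * of_real pi * \<i> * of_real t)"
    have u: "u \<noteq> 0" "norm u = 1" by (simp_all add: u_def norm_exp_eq_Re)
    have u': "exp (2 * of_real pi * \<i> * of_real (1 - t)) = 1 / u"
    proof -
      have "2 * of_real pi * \<i> * of_real (1 - t) =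
            2 * of_real pi * \<i> - 2 * of_real pi * \<i> * (of_real t :: complex)"
        by (simp add: algebra_simps)
      then show ?thesis by (simp add: u_def exp_diff)
    qed
    have d: "((circlepath 0 (1/R)) has_vector_derivative
            (2 * pi * \<i> * (1/R) * exp (2 * of_real pi * \<i> * (1 - t)))) (at (1 - t))"
      using has_vector_derivative_circlepath[of 0 "1/R" "1 - t" UNIV] by simp
    have "(circlepath 0 (1/R) \<circ> (\<lambda>x. 1 - x) has_vector_derivative
             -1 *\<^sub>R (2 * pi * \<i> * (1/R) * exp (2 * of_real pi * \<i> * (1 - t)))) (at t)"
      by (intro vector_diff_chain_within has_vector_derivative_at_within[OF d] derivative_eq_intros
          | simp)+
    then have "(?g has_vector_derivative
                 - (2 * pi * \<i> * (1/R) * exp (2 * of_real pi * \<i> * (1 - t)))) (at t)"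
      by (simp add: o_def reversepath_def)
    then have dg: "vector_derivative ?g (at t within {0..1}) = - (2 * pi * \<i> * (1/R) * (1 / u))"
      using vector_derivative_at_within_ivl[of ?g _ t 0 1] t u' by simp
    have dc: "vector_derivative (circlepath 0 R) (at t within {0..1}) = 2 * pi * \<i> * R * u"
      using vector_derivative_circlepath01[of t 0 R] t by (simp add: u_def)
    define q where "q = complex_of_real R * u"
    have q: "q \<noteq> 0" "norm q = R" using R u by (simp_all add: q_def norm_mult)
    have cq: "circlepath 0 R t = q" by (simp add: circlepath q_def u_def)
    have "?g t = 0 + complex_of_real (1/R) * exp (2 * of_real pi * \<i> * of_real (1 - t))"
      by (simp only: reversepath_def circlepath)
    then have gq: "?g t = 1 / q"
      using R u unfolding u' by (simp add: q_def field_simps)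
    show ?thesis
      unfolding dg dc cq gq inv[OF q(2)] using q u R
      by (simp add: q_def field_simps power2_eq_square)
  qed
  then show ?thesis
    using I unfolding has_contour_integral_def by (subst has_integral_cong) auto
qed

lemma sum_residues_eq_of_inversion:
  fixes f :: "complex \<Rightarrow> complex"
  assumes fin: "finite S" and S0: "0 \<notin> S"
    and holo: "f holomorphic_on - insert 0 S"
    and inv: "\<And>q. q \<noteq> 0 \<Longrightarrow> q \<notin> S \<Longrightarrow> f (1/q) = - (q^2) * f q"
  shows "(\<Sum>p\<in>S. residue f p) = -2 * residue f 0"
proof -
  \<comment> \<open>S lies inside the circle of radius R and outside the circle of radius 1/R.\<close>
  define R where "R = 1 + (\<Sum>z\<in>S. norm z + 1 / norm z)"
  have bound: "norm z < R \<and> 1 / norm z < R" if "z \<in> S" for z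
  proof -
    have "norm z + 1 / norm z \<le> (\<Sum>z\<in>S. norm z + 1 / norm z)"
      by (rule member_le_sum[OF that]) (auto simp: fin)
    then show ?thesis unfolding R_def by (smt (verit) norm_ge_zero divide_nonneg_nonneg)
  qed
  have R: "R \<ge> 1" unfolding R_def by (simp add: sum_nonneg)
  have inside: "norm p < R" if "p \<in> insert 0 S" for p
    using that bound R by auto
  have "contour_integral (circlepath 0 R) f =
        2 * pi * \<i> * (\<Sum>p\<in>insert 0 S. winding_number (circlepath 0 R) p * residue f p)"
  proof (rule Residue_theorem[of UNIV])
    show "path_image (circlepath 0 R) \<subseteq> UNIV - insert 0 S"
      using inside R by (force simp: path_image_circlepath_nonneg)
  qed (use fin holo in \<open>auto simp: Compl_eq_Diff_UNIV\<close>)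
  also have "\<dots> = 2 * pi * \<i> * (residue f 0 + (\<Sum>p\<in>S. residue f p))"
    using inside fin S0 by (simp add: winding_number_circlepath)
  finally have outer:
    "contour_integral (circlepath 0 R) f = 2 * pi * \<i> * (residue f 0 + (\<Sum>p\<in>S. residue f p))" .
  have "cball 0 (1/R) \<subseteq> - S"
  proof
    fix p :: complex assume p: "p \<in> cball 0 (1/R)"
    show "p \<in> - S"
    proof
      assume "p \<in> S"
      then have "p \<noteq> 0" "1 / norm p < R" using S0 bound by auto
      moreover have "norm p \<le> 1/R" using p by simp
      ultimately show False using R by (simp add: field_simps)
    qed
  qed
  then have "(f has_contour_integral 2 * pi * \<i> * residue f 0) (circlepath 0 (1/R))"
    using fin holo S0 R
    by (intro base_residue[of "- S"])
      (auto simp: open_Compl finite_imp_closed Diff_eq insert_commute)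
  then have "(f has_contour_integral - (2 * pi * \<i> * residue f 0))
               (reversepath (circlepath 0 (1/R)))"
    by (rule has_contour_integral_reversepath[OF valid_path_circlepath])
  then have "(f has_contour_integral - (2 * pi * \<i> * residue f 0)) (circlepath 0 R)"
    using R inside by (intro has_contour_integral_circlepath_inversion inv) force+
  then have "contour_integral (circlepath 0 R) f = 2 * pi * \<i> * (- residue f 0)"
    by (simp add: contour_integral_unique)
  then have "2 * pi * \<i> * (residue f 0 + (\<Sum>p\<in>S. residue f p)) = 2 * pi * \<i> * (- residue f 0)"
    using outer by simp
  then have "residue f 0 + (\<Sum>p\<in>S. residue f p) = - residue f 0"
    by (rule mult_left_cancel[THEN iffD1, rotated]) simp
  then show ?thesis by algebra
qed

lemma of_real_Zpf: "of_real (Zpf n w a b) = slit_weight_sum w (of_real a) (of_real b) n 0"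
  by (simp add: Zpf_def slit_weight_sum_def path_weight_def slit_loops_def slit_paths_def)

theorem mainTheorem3:
  fixes lam mu :: real and n w :: nat
  assumes "lam \<ge> 0" and "mu \<ge> 0" and "w \<ge> 1"
  shows "complex_of_real (Zpf n w (1 + lam^2) (1 + mu^2)) =
         - (1/2) * (\<Sum>p\<in>{p. Dw lam mu w p = 0}. residue (fres lam mu w n) p)"
proof -
  have "(\<Sum>p\<in>{p. Dw lam mu w p = 0}. residue (fres lam mu w n) p) =
        -2 * residue (fres lam mu w n) 0"
  proof (rule sum_residues_eq_of_inversion)
    show "finite {p. Dw lam mu w p = 0}"
      unfolding Dw_eq_slit_den using finite_slit_den_zeros[OF assms(3)] .
    show "0 \<notin> {p. Dw lam mu w p = 0}"
      using assms(3) by (simp add: Dw_def power_0_left)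
  qed (auto simp: fres_holomorphic fres_inverse)
  moreover have "complex_of_real (Zpf n w (1 + lam^2) (1 + mu^2)) = residue (fres lam mu w n) 0"
    using slit_weight_sum_eq_slit_coeff[OF assms(3), of 0]
    by (simp add: of_real_Zpf residue_fres_0[OF assms(3)])
  ultimately show ?thesis by simp
qed

end
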